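(* Let $(R,\mathfrak{m})$ be a Noetherian local ring and let $\varphi$ be a self-map of finite length of $R$. Then for every $n\geq 1$ the map $\varphi^n$ is of finite length, and the sequence $\{(\log\lambda(\varphi^n))/n\}_{n\geq1}$ converges, and its limit equals $\inf_{n\geq1}(\log\lambda(\varphi^n))/n$.
   Context: All rings are Noetherian, commutative, with identity. A self-map of a ring is a ring endomorphism; $\varphi^n$ denotes the $n$-fold composition. A homomorphism $f:(R,\mathfrak{m})\to(S,\mathfrak{n})$ of Noetherian local rings is of finite length if it is local and $f(\mathfrak{m})S$ is $\mathfrak{n}$-primary; its length is $\lambda(f):=\ell_S(S/f(\mathfrak{m})S)$. A self-map of finite length of $R$ is an endomorphism of $R$ which is a homomorphism of finite length $R\to R$. *)

theory Defs
  imports "HOL-Analysis.Analysis" "HOL-Algebra.Ideal" "HOL-Algebra.RingHom"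
begin

definition noetherian_cring :: "('a, 'b) ring_scheme \<Rightarrow> bool" where
  "noetherian_cring R \<longleftrightarrow> cring R \<and>
     (\<forall>I. ideal I R \<longrightarrow> (\<exists>S. finite S \<and> S \<subseteq> carrier R \<and> I = genideal R S))"

definition noetherian_local :: "('a, 'b) ring_scheme \<Rightarrow> 'a set \<Rightarrow> bool" where
  "noetherian_local R m \<longleftrightarrow> noetherian_cring R \<and> maximalideal m R \<and>
     (\<forall>I. maximalideal I R \<longrightarrow> I = m)"

definition ring_radical :: "('a, 'b) ring_scheme \<Rightarrow> 'a set \<Rightarrow> 'a set" where
  "ring_radical R I = {x \<in> carrier R. \<exists>k::nat. x [^]\<^bsub>R\<^esub> k \<in> I}"

text \<open>Length of the R-module R/I, computed via the correspondence between
  submodules of R/I and ideals of R containing I: the supremum of the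
  lengths of strict chains of ideals from I to R.\<close>
definition quot_length :: "('a, 'b) ring_scheme \<Rightarrow> 'a set \<Rightarrow> nat" where
  "quot_length R I = Sup {k. \<exists>J :: nat \<Rightarrow> 'a set. J 0 = I \<and> J k = carrier R \<and>
       (\<forall>i\<le>k. ideal (J i) R) \<and> (\<forall>i<k. J i \<subset> J (Suc i))}"

definition finite_length_hom ::
  "('a, 'b) ring_scheme \<Rightarrow> 'a set \<Rightarrow> ('c, 'd) ring_scheme \<Rightarrow> 'c set \<Rightarrow> ('a \<Rightarrow> 'c) \<Rightarrow> bool" where
  "finite_length_hom R m S n f \<longleftrightarrow> f \<in> ring_hom R S \<and> f ` m \<subseteq> n \<and>
     ring_radical S (genideal S (f ` m)) = n"

definition hom_length ::
  "('a, 'b) ring_scheme \<Rightarrow> 'a set \<Rightarrow> ('c, 'd) ring_scheme \<Rightarrow> ('a \<Rightarrow> 'c) \<Rightarrow> nat" where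
  "hom_length R m S f = quot_length S (genideal S (f ` m))"

end

theory Submission
  imports Defs "HOL-Algebra.Ring_Divisibility" "HOL-Algebra.QuotRing"
begin

(* 1. Fekete's lemma: a nonnegative subadditive real sequence a satisfies
      a(n)/n \<longrightarrow> inf a(n)/n.
   2. Lengths of quotients B/A of ideals are measured by chains of ideals ("length_le A B n":
      every strict chain from A to B has at most n steps).  They are subadditive along
      A \<subseteq> B \<subseteq> C (modular law), and a cyclic extension (A + Ry)/A is bounded by R/(A : y).
   3. In the local ring: for an endomorphism f with f(m) \<subseteq> m, R/f(m)R has finite length iff
      f(m)R is m-primary (m is finitely generated), and \<lambda>(g \<circ> f) \<le> \<lambda>(f) \<lambda>(g), obtained by
      pushing a composition series of R/f(m)R forward along g: each factor is R/m, and its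
      image is a cyclic module killed by g(m)R, hence of length at most \<lambda>(g).

   By induction all iterates \<phi>\<^sup>n are of finite length, n \<mapsto> log \<lambda>(\<phi>\<^sup>n) is nonnegative and
   subadditive, and Fekete's lemma gives the convergence of (log \<lambda>(\<phi>\<^sup>n))/n to the infimum. *)

no_notation Sum_Type.Plus (infixr \<open><+>\<close> 65)

section \<open>Fekete's subadditive lemma\<close>

lemma subadditive_multiple:
  fixes a :: "nat \<Rightarrow> real"
  assumes sub: "\<And>i j. a (i + j) \<le> a i + a j"
  shows "a (q * k + r) \<le> real q * a k + a r"
proof (induction q)
  case 0
  then show ?case by simp
next
  case (Suc q)
  have "a (Suc q * k + r) = a (k + (q * k + r))" by (simp add: add.assoc)
  also have "\<dots> \<le> a k + a (q * k + r)" by (rule sub)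
  also have "\<dots> \<le> a k + (real q * a k + a r)" using Suc by simp
  finally show ?case by (simp add: algebra_simps)
qed

text \<open>Division with remainder by a fixed \<open>k\<close> bounds every ratio \<open>a(n)/n\<close> by \<open>a(k)/k\<close>
  up to an error term of order \<open>1/n\<close>.\<close>

lemma subadditive_ratio_bound:
  fixes a :: "nat \<Rightarrow> real"
  assumes a0: "\<And>n. a n \<ge> 0" and sub: "\<And>i j. a (i + j) \<le> a i + a j"
    and k: "k \<ge> 1" and n: "n \<ge> 1"
  shows "a n / real n \<le> a k / real k + (\<Sum>r<k. a r) / real n"
proof -
  define q r where "q = n div k" and "r = n mod k"
  have nqr: "n = q * k + r" and rk: "r < k" unfolding q_def r_def using k by auto
  have "a r \<le> (\<Sum>r<k. a r)" using rk a0 by (intro member_le_sum) auto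
  then have "a n \<le> real q * a k + (\<Sum>r<k. a r)"
    using subadditive_multiple[OF sub, of q k r] nqr by simp
  moreover have "real q * a k \<le> real n * (a k / real k)"
  proof -
    have "real q * real k \<le> real n" using nqr by simp
    then have "(real q * real k) * (a k / real k) \<le> real n * (a k / real k)"
      using a0[of k] by (intro mult_right_mono) auto
    then show ?thesis using k by simp
  qed
  ultimately have "a n \<le> real n * (a k / real k) + (\<Sum>r<k. a r)" by linarith
  then show ?thesis using n by (simp add: field_simps)
qed

theorem fekete:
  fixes a :: "nat \<Rightarrow> real"
  assumes a0: "\<And>n. a n \<ge> 0" and sub: "\<And>i j. a (i + j) \<le> a i + a j"
  shows "(\<lambda>n. a (Suc n) / real (Suc n)) \<longlonglongrightarrow> (INF n\<in>{1..}. a n / real n)"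
proof (rule LIMSEQ_I)
  define L where "L = (INF n\<in>{1..}. a n / real n)"
  have bdd: "bdd_below ((\<lambda>n. a n / real n) ` {1..})"
    by (rule bdd_belowI[of _ 0]) (use a0 in auto)
  fix \<epsilon> :: real assume e: "\<epsilon> > 0"
  have "L < L + \<epsilon> / 2" using e by simp
  then obtain k where k: "k \<ge> 1" "a k / real k < L + \<epsilon> / 2"
    using cINF_less_iff[OF _ bdd, of "L + \<epsilon> / 2"] unfolding L_def by auto
  define S where "S = (\<Sum>r<k. a r)"
  obtain N :: nat where N: "N > 2 * S / \<epsilon>" using reals_Archimedean2 by blast
  show "\<exists>no. \<forall>n\<ge>no. norm (a (Suc n) / real (Suc n) - L) < \<epsilon>"
  proof (intro exI allI impI)
    fix n assume n: "n \<ge> N"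
    have "L \<le> a (Suc n) / real (Suc n)"
      unfolding L_def by (rule cINF_lower[OF bdd]) simp
    moreover have "S / real (Suc n) < \<epsilon> / 2"
    proof -
      have "2 * S < \<epsilon> * real N" using N e by (simp add: field_simps)
      also have "\<dots> \<le> \<epsilon> * real (Suc n)" using n e by simp
      finally show ?thesis by (simp add: field_simps)
    qed
    moreover have "a (Suc n) / real (Suc n) \<le> a k / real k + S / real (Suc n)"
      unfolding S_def by (rule subadditive_ratio_bound[OF a0 sub k(1)]) simp
    ultimately have "0 \<le> a (Suc n) / real (Suc n) - L" "a (Suc n) / real (Suc n) - L < \<epsilon>"
      using k(2) by linarith+
    then show "norm (a (Suc n) / real (Suc n) - L) < \<epsilon>" by simp
  qed
qed

section \<open>Chains of ideals and lengths\<close>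

definition ideal_chain :: "('a, 'b) ring_scheme \<Rightarrow> 'a set \<Rightarrow> 'a set \<Rightarrow> nat \<Rightarrow> bool" where
  "ideal_chain R A B k \<longleftrightarrow> (\<exists>J :: nat \<Rightarrow> 'a set. J 0 = A \<and> J k = B \<and>
       (\<forall>i\<le>k. ideal (J i) R) \<and> (\<forall>i<k. J i \<subset> J (Suc i)))"

text \<open>\<open>length_le R A B n\<close>: the module \<open>B/A\<close> has length at most \<open>n\<close>, i.e. every strict chain
  of ideals from \<open>A\<close> to \<open>B\<close> has at most \<open>n\<close> steps.\<close>

definition length_le :: "('a, 'b) ring_scheme \<Rightarrow> 'a set \<Rightarrow> 'a set \<Rightarrow> nat \<Rightarrow> bool" where
  "length_le R A B n \<longleftrightarrow> (\<forall>k. ideal_chain R A B k \<longrightarrow> k \<le> n)"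

lemma quot_length_chains: "quot_length R I = Sup {k. ideal_chain R I (carrier R) k}"
  unfolding quot_length_def ideal_chain_def by simp

lemma chain_mono:
  assumes "\<forall>i<k. J i \<subseteq> J (Suc i)" "i \<le> j" "j \<le> k"
  shows "J i \<subseteq> J j"
  using assms(2)
proof (induction j rule: dec_induct)
  case (step n)
  then have "J n \<subseteq> J (Suc n)" using assms(1,3) by simp
  then show ?case using step.IH by blast
qed simp

lemma ideal_chain_drop_repeats:
  assumes "\<forall>i\<le>k. ideal (J i) R" "\<forall>i<k. J i \<subseteq> J (Suc i)"
  shows "ideal_chain R (J 0) (J k) (card {i. i < k \<and> J i \<noteq> J (Suc i)})"
  using assms
proof (induction k)
  case 0
  show ?case unfolding ideal_chain_def
    by (rule exI[of _ "\<lambda>_. J 0"]) (use 0 in auto)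
next
  case (Suc k)
  define c where "c = card {i. i < k \<and> J i \<noteq> J (Suc i)}"
  have IH: "ideal_chain R (J 0) (J k) c"
    using Suc unfolding c_def by auto
  show ?case
  proof (cases "J k = J (Suc k)")
    case True
    have "{i. i < Suc k \<and> J i \<noteq> J (Suc i)} = {i. i < k \<and> J i \<noteq> J (Suc i)}"
      using True less_Suc_eq by auto
    then show ?thesis using IH True unfolding c_def by simp
  next
    case False
    have "{i. i < Suc k \<and> J i \<noteq> J (Suc i)} = insert k {i. i < k \<and> J i \<noteq> J (Suc i)}"
      using False less_Suc_eq by auto
    then have card_eq: "card {i. i < Suc k \<and> J i \<noteq> J (Suc i)} = Suc c"
      unfolding c_def by simp
    from IH obtain J' where J': "J' 0 = J 0" "J' c = J k" "\<forall>i\<le>c. ideal (J' i) R"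
      "\<forall>i<c. J' i \<subset> J' (Suc i)" unfolding ideal_chain_def by blast
    have "J k \<subset> J (Suc k)" using Suc.prems False by auto
    then show ?thesis unfolding card_eq ideal_chain_def
      by (intro exI[of _ "J'(Suc c := J (Suc k))"]) (use J' Suc.prems in \<open>auto simp: le_Suc_eq less_Suc_eq\<close>)
  qed
qed

lemma length_le_refl: "length_le R A A 0"
  unfolding length_le_def ideal_chain_def
proof (intro allI impI, elim exE conjE)
  fix k J assume J: "J 0 = A" "J k = A" "\<forall>i<k. J i \<subset> J (Suc i)"
  show "k \<le> 0"
  proof (rule ccontr)
    assume "\<not> k \<le> 0"
    then have "J 0 \<subset> J 1" and "J 1 \<subseteq> J k"
      using J(3) chain_mono[of k J 1 k] by auto
    then show False using J(1,2) by blast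
  qed
qed

lemma length_le_weaken: "length_le R A B n \<Longrightarrow> n \<le> n' \<Longrightarrow> length_le R A B n'"
  unfolding length_le_def by fastforce

text \<open>Enlarging the bottom ideal does not increase the length: a chain from the larger ideal
  \<open>A\<close> extends to a strictly longer one from \<open>A'\<close>.\<close>

lemma length_le_bottom_mono:
  assumes iA': "ideal A' R" and sub: "A' \<subseteq> A" and b: "length_le R A' B n"
  shows "length_le R A B n"
  unfolding length_le_def
proof (intro allI impI)
  fix k assume c: "ideal_chain R A B k"
  show "k \<le> n"
  proof (cases "A' = A")
    case True
    then show ?thesis using b c unfolding length_le_def by blast
  next
    case False
    obtain J where J: "J 0 = A" "J k = B" "\<forall>i\<le>k. ideal (J i) R" "\<forall>i<k. J i \<subset> J (Suc i)"
      using c unfolding ideal_chain_def by blast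
    define J' where "J' i = (if i = 0 then A' else J (i - 1))" for i
    have "ideal_chain R A' B (Suc k)" unfolding ideal_chain_def
    proof (rule exI[of _ J'], intro conjI allI impI)
      fix i assume i: "i < Suc k"
      show "J' i \<subset> J' (Suc i)"
        using J(1,4) sub False i unfolding J'_def by (cases i) auto
    qed (use J iA' in \<open>auto simp: J'_def\<close>)
    then show ?thesis using b unfolding length_le_def by fastforce
  qed
qed

section \<open>Ideal arithmetic in a commutative ring\<close>

definition colon :: "('a, 'b) ring_scheme \<Rightarrow> 'a set \<Rightarrow> 'a \<Rightarrow> 'a set" where
  "colon R M y = {r \<in> carrier R. r \<otimes>\<^bsub>R\<^esub> y \<in> M}"

context cring
begin

lemma ideal_subset_carrier: "ideal I R \<Longrightarrow> I \<subseteq> carrier R"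
  by (rule additive_subgroup.a_subset[OF ideal.axioms(1)])

lemma ideal_minus_closed: "ideal I R \<Longrightarrow> a \<in> I \<Longrightarrow> b \<in> I \<Longrightarrow> a \<ominus> b \<in> I"
  unfolding a_minus_def
  by (meson additive_subgroup.a_closed additive_subgroup.a_inv_closed ideal.axioms(1))

lemma set_addE: "x \<in> A <+> B \<Longrightarrow> (\<And>a b. a \<in> A \<Longrightarrow> b \<in> B \<Longrightarrow> x = a \<oplus> b \<Longrightarrow> P) \<Longrightarrow> P"
  unfolding set_add_def' by blast

lemma set_addI: "a \<in> A \<Longrightarrow> b \<in> B \<Longrightarrow> a \<oplus> b \<in> A <+> B"
  unfolding set_add_def' by blast

lemma set_add_mono: "A \<subseteq> A' \<Longrightarrow> A <+> B \<subseteq> A' <+> B"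
  unfolding set_add_def' by blast

lemma ideal_sum_upper:
  assumes "ideal A R" "ideal B R"
  shows "A \<subseteq> A <+> B" "B \<subseteq> A <+> B"
proof -
  have "A \<union> B \<subseteq> carrier R" using ideal_subset_carrier assms by blast
  then have "A \<union> B \<subseteq> Idl (A \<union> B)" by (rule genideal_self)
  then have "A \<union> B \<subseteq> A <+> B" using union_genideal[OF assms] by simp
  then show "A \<subseteq> A <+> B" "B \<subseteq> A <+> B" by blast+
qed

lemma ideal_sum_least:
  assumes "ideal A R" "ideal B R" "ideal C R" "A \<subseteq> C" "B \<subseteq> C"
  shows "A <+> B \<subseteq> C"
proof -
  have "Idl (A \<union> B) \<subseteq> C" by (rule genideal_minimal[OF assms(3)]) (use assms(4,5) in blast)
  then show ?thesis using union_genideal[OF assms(1,2)] by simp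
qed

lemma ideal_sum_absorb:
  assumes "ideal A R" "ideal B R" "A \<subseteq> B"
  shows "A <+> B = B" "B <+> A = B"
  using ideal_sum_least[OF assms(1,2,2,3) subset_refl] ideal_sum_least[OF assms(2,1,2) subset_refl assms(3)]
    ideal_sum_upper[OF assms(1,2)] ideal_sum_upper[OF assms(2,1)] by blast+

lemma ideal_eq_by_modularity:
  assumes iI: "ideal I R" and iI': "ideal I' R" and iB: "ideal B R" and sub: "I \<subseteq> I'"
    and cap: "I \<inter> B = I' \<inter> B" and sum: "I <+> B = I' <+> B"
  shows "I' = I"
proof
  show "I' \<subseteq> I"
  proof
    fix x assume x: "x \<in> I'"
    then have "x \<in> I <+> B" using sum ideal_sum_upper(1)[OF iI' iB] by blast
    then obtain j b where jb: "j \<in> I" "b \<in> B" "x = j \<oplus> b" by (rule set_addE)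
    have "b = x \<ominus> j"
      using jb ideal.Icarr[OF iI] ideal.Icarr[OF iB] by algebra
    then have "b \<in> I'" using ideal_minus_closed[OF iI' x] jb(1) sub by blast
    then have "b \<in> I" using cap jb(2) by blast
    then show "x \<in> I" using jb additive_subgroup.a_closed[OF ideal.axioms(1)[OF iI]] by simp
  qed
qed (rule sub)

lemma colon_ideal:
  assumes iM: "ideal M R" and y: "y \<in> carrier R"
  shows "ideal (colon R M y) R"
proof (rule idealI[OF ring_axioms])
  show "subgroup (colon R M y) (add_monoid R)"
  proof (rule subgroup.intro)
    fix a b assume "a \<in> colon R M y" "b \<in> colon R M y"
    then show "a \<otimes>\<^bsub>add_monoid R\<^esub> b \<in> colon R M y"
      using y l_distr additive_subgroup.a_closed[OF ideal.axioms(1)[OF iM]]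
      unfolding colon_def by auto
  next
    fix a assume "a \<in> colon R M y"
    then show "inv\<^bsub>add_monoid R\<^esub> a \<in> colon R M y"
      using y l_minus additive_subgroup.a_inv_closed[OF ideal.axioms(1)[OF iM]]
      unfolding colon_def by (simp add: a_inv_def[symmetric])
  qed (use y additive_subgroup.zero_closed[OF ideal.axioms(1)[OF iM]] in \<open>auto simp: colon_def\<close>)
next
  fix a x assume a: "a \<in> colon R M y" and x: "x \<in> carrier R"
  have "(x \<otimes> a) \<otimes> y = x \<otimes> (a \<otimes> y)" "(a \<otimes> x) \<otimes> y = x \<otimes> (a \<otimes> y)"
    using a x y m_assoc m_comm unfolding colon_def by auto
  then show "x \<otimes> a \<in> colon R M y" "a \<otimes> x \<in> colon R M y"
    using a x ideal.I_l_closed[OF iM] unfolding colon_def by auto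
qed

lemma colon_determines:
  assumes iA: "ideal A R" and iM: "ideal M R" and iM': "ideal M' R" and y: "y \<in> carrier R"
    and AM: "A \<subseteq> M" and MM': "M \<subseteq> M'" and M'top: "M' \<subseteq> A <+> PIdl y"
    and eq: "colon R M y = colon R M' y"
  shows "M' = M"
proof
  show "M' \<subseteq> M"
  proof
    fix x assume x: "x \<in> M'"
    then obtain a z where az: "a \<in> A" "z \<in> PIdl y" "x = a \<oplus> z"
      using M'top by (blast elim: set_addE)
    then obtain r where r: "r \<in> carrier R" "z = r \<otimes> y" unfolding cgenideal_def by blast
    have "z = x \<ominus> a" using az r y ideal.Icarr[OF iA] by algebra
    then have "z \<in> M'" using ideal_minus_closed[OF iM' x] az(1) AM MM' by blast
    then have "r \<in> colon R M y" using eq r unfolding colon_def by simp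
    then have "z \<in> M" using r unfolding colon_def by simp
    then show "x \<in> M" using az AM additive_subgroup.a_closed[OF ideal.axioms(1)[OF iM]] by blast
  qed
qed (rule MM')

text \<open>In a local ring with \<open>w \<in> m\<close> the factor
  \<open>1 - w\<close> is a unit (\<open>unit_cancel\<close>), so \<open>x\<close> lies in every ideal containing \<open>j\<close>.\<close>

lemma absorb_multiple:
  assumes "x = j \<oplus> w \<otimes> x" "j \<in> carrier R" "w \<in> carrier R" "x \<in> carrier R"
  shows "(\<one> \<ominus> w) \<otimes> x = j"
proof -
  have "(\<one> \<ominus> w) \<otimes> x = x \<ominus> w \<otimes> x" using assms(3,4) by algebra
  also have "\<dots> = (j \<oplus> w \<otimes> x) \<ominus> w \<otimes> x"
    by (rule arg_cong[where f = "\<lambda>t. t \<ominus> w \<otimes> x"]) (rule assms(1))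
  also have "\<dots> = j" using assms(2-4) by algebra
  finally show ?thesis .
qed

lemma genideal_image:
  assumes g: "g \<in> ring_hom R R" and S: "S \<subseteq> carrier R"
  shows "Idl (g ` (Idl S)) = Idl (g ` S)"
proof
  have gS: "g ` S \<subseteq> carrier R" using S ring_hom_closed[OF g] by blast
  have "ideal {r \<in> carrier R. g r \<in> Idl (g ` S)} R"
    by (rule ring_hom_ring.ideal_vimage[OF ring_hom_ringI2[OF ring_axioms ring_axioms g]
          genideal_ideal[OF gS]])
  moreover have "S \<subseteq> {r \<in> carrier R. g r \<in> Idl (g ` S)}" using S genideal_self[OF gS] by blast
  ultimately have "Idl S \<subseteq> {r \<in> carrier R. g r \<in> Idl (g ` S)}" by (rule genideal_minimal)
  then show "Idl (g ` (Idl S)) \<subseteq> Idl (g ` S)" using genideal_minimal[OF genideal_ideal[OF gS]] by blast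
next
  have "S \<subseteq> Idl S" "Idl S \<subseteq> carrier R"
    using genideal_self[OF S] ideal_subset_carrier[OF genideal_ideal[OF S]] .
  then show "Idl (g ` S) \<subseteq> Idl (g ` (Idl S))"
    using subset_Idl_subset[of "g ` (Idl S)" "g ` S"] ring_hom_closed[OF g] by blast
qed

lemma genideal_image_sum:
  assumes g: "g \<in> ring_hom R R" and iJ: "ideal J R" and x: "x \<in> carrier R"
  shows "Idl (g ` (J <+> PIdl x)) = Idl (g ` J) <+> PIdl (g x)"
proof
  have gJ: "g ` J \<subseteq> carrier R" using ideal_subset_carrier[OF iJ] ring_hom_closed[OF g] by blast
  have gx: "g x \<in> carrier R" using ring_hom_closed[OF g x] .
  have iS: "ideal (Idl (g ` J) <+> PIdl (g x)) R"
    using add_ideals[OF genideal_ideal[OF gJ] cgenideal_ideal[OF gx]] .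
  have "g ` (J <+> PIdl x) \<subseteq> Idl (g ` J) <+> PIdl (g x)"
  proof
    fix w assume "w \<in> g ` (J <+> PIdl x)"
    then obtain j r where jr: "j \<in> J" "r \<in> carrier R" "w = g (j \<oplus> r \<otimes> x)"
      unfolding cgenideal_def by (blast elim: set_addE)
    then have "w = g j \<oplus> g r \<otimes> g x"
      using x ideal.Icarr[OF iJ] ring_hom_add[OF g] ring_hom_mult[OF g] by simp
    moreover have "g j \<in> Idl (g ` J)" using genideal_self[OF gJ] jr(1) by blast
    moreover have "g r \<otimes> g x \<in> PIdl (g x)" unfolding cgenideal_def
      using ring_hom_closed[OF g jr(2)] by blast
    ultimately show "w \<in> Idl (g ` J) <+> PIdl (g x)" by (blast intro: set_addI)
  qed
  then show "Idl (g ` (J <+> PIdl x)) \<subseteq> Idl (g ` J) <+> PIdl (g x)"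
    by (rule genideal_minimal[OF iS])
next
  have iP: "ideal (PIdl x) R" using cgenideal_ideal[OF x] .
  have gJx: "g ` (J <+> PIdl x) \<subseteq> carrier R"
    using ideal_subset_carrier[OF add_ideals[OF iJ iP]] ring_hom_closed[OF g] by blast
  have iT: "ideal (Idl (g ` (J <+> PIdl x))) R" using genideal_ideal[OF gJx] .
  have "Idl (g ` J) \<subseteq> Idl (g ` (J <+> PIdl x))"
    using subset_Idl_subset[OF gJx] ideal_sum_upper(1)[OF iJ iP] by blast
  moreover have "g x \<in> Idl (g ` (J <+> PIdl x))"
    using genideal_self[OF gJx] ideal_sum_upper(2)[OF iJ iP] cgenideal_self[OF x] by blast
  then have "PIdl (g x) \<subseteq> Idl (g ` (J <+> PIdl x))" by (rule cgenideal_minimal[OF iT])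
  ultimately show "Idl (g ` J) <+> PIdl (g x) \<subseteq> Idl (g ` (J <+> PIdl x))"
    using ideal_sum_least[OF genideal_ideal cgenideal_ideal iT]
      ring_hom_closed[OF g x] ideal_subset_carrier[OF iJ] ring_hom_closed[OF g] by blast
qed

lemma genideal_image_colon:
  assumes g: "g \<in> ring_hom R R" and iJ: "ideal J R" and x: "x \<in> carrier R"
    and K: "K \<subseteq> colon R J x"
  shows "Idl (g ` K) \<subseteq> colon R (Idl (g ` J)) (g x)"
proof (rule genideal_minimal[OF colon_ideal])
  have gJ: "g ` J \<subseteq> carrier R" using ideal_subset_carrier[OF iJ] ring_hom_closed[OF g] by blast
  show "ideal (Idl (g ` J)) R" using genideal_ideal[OF gJ] .
  show "g x \<in> carrier R" using ring_hom_closed[OF g x] .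
  show "g ` K \<subseteq> colon R (Idl (g ` J)) (g x)"
  proof
    fix w assume "w \<in> g ` K"
    then obtain a where a: "a \<in> carrier R" "a \<otimes> x \<in> J" "w = g a"
      using K unfolding colon_def by blast
    then have "w \<otimes> g x = g (a \<otimes> x)" using x ring_hom_mult[OF g] by simp
    moreover have "g (a \<otimes> x) \<in> Idl (g ` J)" using genideal_self[OF gJ] a(2) by blast
    ultimately show "w \<in> colon R (Idl (g ` J)) (g x)"
      using a ring_hom_closed[OF g] unfolding colon_def by auto
  qed
qed

end

section \<open>Estimates for lengths\<close>

context cring
begin

text \<open>Subadditivity along \<open>A \<subseteq> B \<subseteq> C\<close>: a strict chain from \<open>A\<close> to \<open>C\<close> is cut by \<open>B\<close> into
  the traces \<open>J i \<inter> B\<close> (from \<open>A\<close> to \<open>B\<close>) and \<open>J i + B\<close> (from \<open>B\<close> to \<open>C\<close>); by the modular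
  law every strict step survives in one of them.\<close>

lemma length_le_subadd:
  assumes iA: "ideal A R" and iB: "ideal B R" and iC: "ideal C R"
    and AB: "A \<subseteq> B" and BC: "B \<subseteq> C"
    and b1: "length_le R A B p" and b2: "length_le R B C q"
  shows "length_le R A C (p + q)"
  unfolding length_le_def
proof (intro allI impI)
  fix k assume "ideal_chain R A C k"
  then obtain J where J: "J 0 = A" "J k = C" "\<forall>i\<le>k. ideal (J i) R" "\<forall>i<k. J i \<subset> J (Suc i)"
    unfolding ideal_chain_def by blast
  define U where "U i = J i \<inter> B" for i
  define V where "V i = J i <+> B" for i
  define steps where "steps X = {i. i < k \<and> X i \<noteq> X (Suc i)}" for X :: "nat \<Rightarrow> 'a set"
  have "\<forall>i\<le>k. ideal (U i) R" "\<forall>i<k. U i \<subseteq> U (Suc i)"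
    unfolding U_def using J(3,4) iB by (auto simp: i_intersect)
  then have "ideal_chain R (U 0) (U k) (card (steps U))"
    unfolding steps_def by (rule ideal_chain_drop_repeats)
  moreover have "U 0 = A" "U k = B" unfolding U_def using J(1,2) AB BC by blast+
  ultimately have cU: "card (steps U) \<le> p" using b1 unfolding length_le_def by simp
  have "\<forall>i\<le>k. ideal (V i) R" "\<forall>i<k. V i \<subseteq> V (Suc i)"
    unfolding V_def using J(3,4) iB by (auto simp: add_ideals set_add_mono psubset_imp_subset)
  then have "ideal_chain R (V 0) (V k) (card (steps V))"
    unfolding steps_def by (rule ideal_chain_drop_repeats)
  moreover have "V 0 = B" "V k = C"
    unfolding V_def using J(1,2) ideal_sum_absorb iA iB iC AB BC by simp_all
  ultimately have cV: "card (steps V) \<le> q" using b2 unfolding length_le_def by simp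
  have "{..<k} \<subseteq> steps U \<union> steps V"
  proof
    fix i assume i: "i \<in> {..<k}"
    have "J (Suc i) \<noteq> J i" using J(4) i by blast
    then have "\<not> (U i = U (Suc i) \<and> V i = V (Suc i))"
      using ideal_eq_by_modularity[of "J i" "J (Suc i)" B] J(3,4) iB i
      unfolding U_def V_def by auto
    then show "i \<in> steps U \<union> steps V" using i unfolding steps_def by auto
  qed
  then have "k \<le> card (steps U \<union> steps V)"
    using card_mono[of "steps U \<union> steps V" "{..<k}"] unfolding steps_def by simp
  also have "\<dots> \<le> card (steps U) + card (steps V)" by (rule card_Un_le)
  finally show "k \<le> p + q" using cU cV by linarith
qed

lemma length_le_chain_sum:
  assumes iL: "\<forall>i\<le>k. ideal (L i) R" and mL: "\<forall>i<k. L i \<subseteq> L (Suc i)"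
    and b: "\<forall>i<k. length_le R (L i) (L (Suc i)) q"
  shows "length_le R (L 0) (L k) (k * q)"
  using assms
proof (induction k)
  case 0
  then show ?case using length_le_refl by simp
next
  case (Suc k)
  have "L 0 \<subseteq> L k" using chain_mono[of k L 0 k] Suc.prems(2) by simp
  then have "length_le R (L 0) (L (Suc k)) (k * q + q)"
    using length_le_subadd[of "L 0" "L k" "L (Suc k)"] Suc by simp
  then show ?case by (simp add: add.commute)
qed

text \<open>The cyclic module \<open>(A + R y)/A \<cong> R/(A : y)\<close>: chains between \<open>A\<close> and \<open>A + R y\<close> map
  injectively to chains of colon ideals from \<open>(A : y)\<close> to \<open>R\<close>.\<close>

lemma length_le_cyclic:
  assumes iA: "ideal A R" and y: "y \<in> carrier R"
    and b: "length_le R (colon R A y) (carrier R) q"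
  shows "length_le R A (A <+> PIdl y) q"
  unfolding length_le_def
proof (intro allI impI)
  fix t assume "ideal_chain R A (A <+> PIdl y) t"
  then obtain M where M: "M 0 = A" "M t = A <+> PIdl y" "\<forall>i\<le>t. ideal (M i) R"
    "\<forall>i<t. M i \<subset> M (Suc i)" unfolding ideal_chain_def by blast
  have mono: "M i \<subseteq> M j" if "i \<le> j" "j \<le> t" for i j
    using chain_mono[of t M i j] M(4) that by blast
  have "ideal_chain R (colon R A y) (carrier R) t"
    unfolding ideal_chain_def
  proof (intro exI[of _ "\<lambda>i. colon R (M i) y"] conjI allI impI)
    have "r \<otimes> y \<in> A <+> PIdl y" if "r \<in> carrier R" for r
      using that ideal_sum_upper(2)[OF iA cgenideal_ideal[OF y]] unfolding cgenideal_def by blast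
    then show "colon R (M t) y = carrier R" using M(2) unfolding colon_def by blast
    fix i
    show "i \<le> t \<Longrightarrow> ideal (colon R (M i) y) R" using colon_ideal M(3) y by blast
    assume i: "i < t"
    have "colon R (M i) y \<subseteq> colon R (M (Suc i)) y"
      using M(4) i unfolding colon_def by blast
    moreover have "colon R (M i) y \<noteq> colon R (M (Suc i)) y"
      using colon_determines[OF iA _ _ y, of "M i" "M (Suc i)"] M mono[of 0 i] mono[of "Suc i" t] i
      by auto
    ultimately show "colon R (M i) y \<subset> colon R (M (Suc i)) y" by blast
  qed (use M(1) in simp)
  then show "t \<le> q" using b unfolding length_le_def by blast
qed

lemma length_le_split:
  assumes iA: "ideal A R" and g: "g \<in> carrier R"
    and b1: "length_le R (colon R A g) (carrier R) p"
    and b2: "length_le R (A <+> PIdl g) (carrier R) q"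
  shows "length_le R A (carrier R) (p + q)"
proof -
  have iP: "ideal (PIdl g) R" using cgenideal_ideal[OF g] .
  have iB: "ideal (A <+> PIdl g) R" using add_ideals[OF iA iP] .
  show ?thesis
    using length_le_subadd[OF iA iB oneideal ideal_sum_upper(1)[OF iA iP]
        ideal_subset_carrier[OF iB] length_le_cyclic[OF iA g b1] b2] .
qed

lemma ideal_chain_exists:
  assumes "ideal I R"
  shows "\<exists>k. ideal_chain R I (carrier R) k"
proof (cases "I = carrier R")
  case True
  then show ?thesis unfolding ideal_chain_def
    by (intro exI[of _ 0] exI[of _ "\<lambda>_. I"]) (use assms in simp)
next
  case False
  then have "I \<subset> carrier R" using ideal_subset_carrier[OF assms] by blast
  then show ?thesis unfolding ideal_chain_def
    by (intro exI[of _ 1] exI[of _ "\<lambda>i. if i = 0 then I else carrier R"]) (use assms oneideal in auto)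
qed

lemma quot_length_longest:
  assumes iI: "ideal I R" and b: "length_le R I (carrier R) n"
  shows "length_le R I (carrier R) (quot_length R I)" "quot_length R I \<le> n"
    "ideal_chain R I (carrier R) (quot_length R I)"
proof -
  define S where "S = {k. ideal_chain R I (carrier R) k}"
  have fin: "finite S" unfolding S_def using b unfolding length_le_def
    by (metis (mono_tags, lifting) finite_nat_set_iff_bounded_le mem_Collect_eq)
  have ne: "S \<noteq> {}" unfolding S_def using ideal_chain_exists[OF iI] by blast
  have ql: "quot_length R I = Max S" unfolding quot_length_chains S_def[symmetric]
    using fin ne by (simp add: Sup_nat_def)
  show "length_le R I (carrier R) (quot_length R I)"
    unfolding ql length_le_def using fin S_def by simp
  show "quot_length R I \<le> n" unfolding ql using fin ne b unfolding S_def length_le_def by simp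
  show "ideal_chain R I (carrier R) (quot_length R I)" unfolding ql using Max_in[OF fin ne] S_def by simp
qed

lemma quot_length_pos:
  assumes iI: "ideal I R" and b: "length_le R I (carrier R) n" and np: "I \<noteq> carrier R"
  shows "1 \<le> quot_length R I"
proof -
  have "I \<subset> carrier R" using ideal_subset_carrier[OF iI] np by blast
  then have "ideal_chain R I (carrier R) 1" unfolding ideal_chain_def
    by (intro exI[of _ "\<lambda>i. if i = 0 then I else carrier R"]) (use iI oneideal in auto)
  then show ?thesis using quot_length_longest(1)[OF iI b] unfolding length_le_def by blast
qed

text \<open>In a longest chain from \<open>I\<close> to \<open>R\<close> no ideal fits strictly between consecutive members
  (a composition series): inserting it would give a longer chain.\<close>

lemma longest_chain_saturated:
  assumes iI: "ideal I R" and b: "length_le R I (carrier R) n"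
    and J: "J 0 = I" "J k = carrier R" "\<forall>i\<le>k. ideal (J i) R" "\<forall>i<k. J i \<subset> J (Suc i)"
    and k: "k = quot_length R I"
    and i: "i < k" and iL: "ideal L R" and L1: "J i \<subseteq> L" and L2: "L \<subseteq> J (Suc i)"
  shows "L = J i \<or> L = J (Suc i)"
proof (rule ccontr)
  assume "\<not> ?thesis"
  then have s1: "J i \<subset> L" and s2: "L \<subset> J (Suc i)" using L1 L2 by auto
  define J' where "J' j = (if j \<le> i then J j else if j = Suc i then L else J (j - 1))" for j
  have "ideal_chain R I (carrier R) (Suc k)" unfolding ideal_chain_def
  proof (rule exI[of _ J'], intro conjI allI impI)
    fix j assume j: "j < Suc k"
    consider "j < i" | "j = i" | "j = Suc i" | "j > Suc i" by linarith
    then show "J' j \<subset> J' (Suc j)"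
    proof cases
      case 4
      then obtain j' where "j = Suc j'" "j' > i" by (cases j) auto
      then show ?thesis unfolding J'_def using J(4) j by auto
    qed (use J(4) i s1 s2 in \<open>auto simp: J'_def\<close>)
  qed (use J iL i in \<open>auto simp: J'_def\<close>)
  then show False
    using quot_length_longest(1)[OF iI b] k unfolding length_le_def by fastforce
qed

end

context ring
begin

lemma exists_maximalideal:
  assumes iI: "ideal I R" and np: "I \<noteq> carrier R"
  shows "\<exists>M. maximalideal M R \<and> I \<subseteq> M"
proof -
  define \<A> where "\<A> = {J. ideal J R \<and> I \<subseteq> J \<and> \<one> \<notin> J}"
  have oneI: "\<one> \<notin> I" using ideal.one_imp_carrier[OF iI] np by blast
  have "\<exists>M\<in>\<A>. \<forall>X\<in>\<A>. M \<subseteq> X \<longrightarrow> X = M"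
  proof (rule subset_Zorn_nonempty)
    show "\<A> \<noteq> {}" unfolding \<A>_def using iI oneI by blast
    fix C assume C: "C \<noteq> {}" "subset.chain \<A> C"
    have CA: "C \<subseteq> \<A>" using C(2) by (simp add: pred_on.chain_def)
    have "subset.chain {I. ideal I R} C"
      using C(2) CA unfolding pred_on.chain_def \<A>_def by auto
    then have "ideal (\<Union>C) R" using chain_Union_is_ideal[of C] C(1) by simp
    moreover have "I \<subseteq> \<Union>C" "\<one> \<notin> \<Union>C" using C(1) CA unfolding \<A>_def by auto
    ultimately show "\<Union>C \<in> \<A>" unfolding \<A>_def by simp
  qed
  then obtain M where M: "M \<in> \<A>" "\<And>X. X \<in> \<A> \<Longrightarrow> M \<subseteq> X \<Longrightarrow> X = M" by blast
  have iM: "ideal M R" and IM: "I \<subseteq> M" and oM: "\<one> \<notin> M" using M(1) unfolding \<A>_def by auto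
  have "maximalideal M R"
  proof (rule maximalidealI[OF iM])
    show "carrier R \<noteq> M" using oM by auto
    fix J assume J: "ideal J R" "M \<subseteq> J" "J \<subseteq> carrier R"
    show "J = M \<or> J = carrier R"
    proof (cases "\<one> \<in> J")
      case True
      then show ?thesis using ideal.one_imp_carrier[OF J(1)] by blast
    next
      case False
      then have "J \<in> \<A>" unfolding \<A>_def using J IM by blast
      then show ?thesis using M(2) J(2) by blast
    qed
  qed
  then show ?thesis using IM by blast
qed

lemma length_le_maximal:
  assumes "maximalideal M R"
  shows "length_le R M (carrier R) 1"
  unfolding length_le_def ideal_chain_def
proof (intro allI impI, elim exE conjE)
  fix k J assume J: "J 0 = M" "J k = carrier R" "\<forall>i\<le>k. ideal (J i) R" "\<forall>i<k. J i \<subset> J (Suc i)"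
  show "k \<le> 1"
  proof (rule ccontr)
    assume "\<not> k \<le> 1"
    then have k: "2 \<le> k" by simp
    have i1: "ideal (J 1) R" using J(3) k by auto
    have "J 0 \<subset> J (Suc 0)" using J(4) k by simp
    then have "M \<subset> J 1" using J(1) by simp
    then have "J 1 = carrier R"
      using maximalideal.I_maximal[OF assms i1] additive_subgroup.a_subset[OF ideal.axioms(1)[OF i1]]
      by blast
    moreover have "J 1 \<subset> J 2" using J(4) k by (auto simp: numeral_2_eq_2)
    moreover have "J 2 \<subseteq> carrier R" using J(3) k additive_subgroup.a_subset ideal.axioms(1) by blast
    ultimately show False by blast
  qed
qed

end

lemma sum_update_nat:
  assumes "finite G" "g \<in> G"
  shows "sum (f(g := v)) G + f g = sum f G + (v::nat)"
proof -
  have "sum (f(g := v)) (G - {g}) = sum f (G - {g})" by (rule sum.cong) auto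
  then show ?thesis using sum.remove[OF assms, of f] sum.remove[OF assms, of "f(g := v)"] by simp
qed

section \<open>Local rings\<close>

locale local_cring = cring +
  fixes m :: "'a set"
  assumes max: "maximalideal m R"
    and unique_max: "\<And>I. maximalideal I R \<Longrightarrow> I = m"
begin

lemma m_ideal: "ideal m R"
  using maximalideal.axioms(1)[OF max] .

lemma m_proper: "m \<noteq> carrier R"
  using maximalideal.I_notcarr[OF max] by blast

lemma one_notin_m: "\<one> \<notin> m"
  using ideal.one_imp_carrier[OF m_ideal] m_proper by blast

lemma m_carrier: "m \<subseteq> carrier R"
  using ideal_subset_carrier[OF m_ideal] .

lemma proper_ideal_in_m: "ideal I R \<Longrightarrow> I \<noteq> carrier R \<Longrightarrow> I \<subseteq> m"
  using exists_maximalideal unique_max by blast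

lemma unit_cancel:
  assumes iA: "ideal A R" and a: "a \<in> m" and y: "y \<in> carrier R" and mem: "(\<one> \<ominus> a) \<otimes> y \<in> A"
  shows "y \<in> A"
proof -
  have ac: "a \<in> carrier R" using a m_carrier by blast
  have c: "\<one> \<ominus> a \<in> carrier R" using ac by simp
  have unit: "PIdl (\<one> \<ominus> a) = carrier R"
  proof (rule ccontr)
    assume "PIdl (\<one> \<ominus> a) \<noteq> carrier R"
    then have "\<one> \<ominus> a \<in> m"
      using proper_ideal_in_m[OF cgenideal_ideal[OF c]] cgenideal_self[OF c] by blast
    then have "(\<one> \<ominus> a) \<oplus> a \<in> m"
      using additive_subgroup.a_closed[OF ideal.axioms(1)[OF m_ideal] _ a] by blast
    moreover have "(\<one> \<ominus> a) \<oplus> a = \<one>" using ac by algebra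
    ultimately show False using one_notin_m by simp
  qed
  have "\<one> \<in> PIdl (\<one> \<ominus> a)" unfolding unit by simp
  then obtain u where u: "u \<in> carrier R" "\<one> = u \<otimes> (\<one> \<ominus> a)"
    unfolding cgenideal_def by blast
  have "u \<otimes> ((\<one> \<ominus> a) \<otimes> y) = (u \<otimes> (\<one> \<ominus> a)) \<otimes> y"
    using u(1) c y by (simp add: m_assoc)
  also have "\<dots> = y" unfolding u(2)[symmetric] using y by simp
  finally show "y \<in> A" using ideal.I_l_closed[OF iA mem u(1)] by simp
qed

text \<open>If \<open>a x \<notin> J0\<close> for some \<open>a \<in> m\<close>, then \<open>x \<in> J0 + R a x\<close> and
  \<open>unit_cancel\<close> would give \<open>x \<in> J0\<close>.\<close>

lemma simple_step:
  assumes i0: "ideal J0 R" and i1: "ideal J1 R" and s: "J0 \<subset> J1"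
    and nb: "\<And>L. ideal L R \<Longrightarrow> J0 \<subseteq> L \<Longrightarrow> L \<subseteq> J1 \<Longrightarrow> L = J0 \<or> L = J1"
  shows "\<exists>x\<in>carrier R. J1 = J0 <+> PIdl x \<and> m \<subseteq> colon R J0 x"
proof -
  have gen: "J1 = J0 <+> PIdl y" if y: "y \<in> J1" "y \<notin> J0" for y
  proof -
    have yc: "y \<in> carrier R" using ideal.Icarr[OF i1 y(1)] .
    have iP: "ideal (PIdl y) R" using cgenideal_ideal[OF yc] .
    have "J0 <+> PIdl y \<subseteq> J1"
      using ideal_sum_least[OF i0 iP i1] s cgenideal_minimal[OF i1 y(1)] by blast
    moreover have "y \<in> J0 <+> PIdl y" using ideal_sum_upper(2)[OF i0 iP] cgenideal_self[OF yc] by blast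
    ultimately show ?thesis using nb[OF add_ideals[OF i0 iP]] ideal_sum_upper(1)[OF i0 iP] y(2) by blast
  qed
  obtain x where x: "x \<in> J1" "x \<notin> J0" using s by blast
  have xc: "x \<in> carrier R" using ideal.Icarr[OF i1 x(1)] .
  have "a \<in> colon R J0 x" if a: "a \<in> m" for a
  proof (rule ccontr)
    have ac: "a \<in> carrier R" using a m_carrier by blast
    assume "a \<notin> colon R J0 x"
    then have "a \<otimes> x \<notin> J0" using ac unfolding colon_def by simp
    moreover have "a \<otimes> x \<in> J1" using ideal.I_l_closed[OF i1 x(1) ac] .
    ultimately have "x \<in> J0 <+> PIdl (a \<otimes> x)" using gen x(1) by blast
    then obtain j r where jr: "j \<in> J0" "r \<in> carrier R" "x = j \<oplus> r \<otimes> (a \<otimes> x)"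
      unfolding cgenideal_def by (blast elim: set_addE)
    then have "(\<one> \<ominus> r \<otimes> a) \<otimes> x = j"
      using ac xc ideal.Icarr[OF i0] by (intro absorb_multiple) (auto simp: m_assoc)
    moreover have "r \<otimes> a \<in> m" using ideal.I_l_closed[OF m_ideal a jr(2)] .
    ultimately have "x \<in> J0" using unit_cancel[OF i0 _ xc] jr(1) by metis
    then show False using x(2) by simp
  qed
  then show ?thesis using gen[OF x] xc by blast
qed

text \<open>Finite colength forces the radical: if \<open>x \<in> m\<close> had no power in \<open>A\<close>, the ideals
  \<open>A + R x\<^sup>e\<close> would form arbitrarily long strict chains.\<close>

lemma power_step_stable:
  assumes iA: "ideal A R" and x: "x \<in> m"
    and eq: "A <+> PIdl (x [^] Suc e) = A <+> PIdl (x [^] e)"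
  shows "x [^] e \<in> A"
proof -
  have xc: "x \<in> carrier R" using x m_carrier by blast
  have pc: "x [^] e \<in> carrier R" using xc by simp
  have "x [^] e \<in> A <+> PIdl (x [^] Suc e)"
    using eq ideal_sum_upper(2)[OF iA cgenideal_ideal[OF pc]] cgenideal_self[OF pc] by blast
  then obtain a r where ar: "a \<in> A" "r \<in> carrier R" "x [^] e = a \<oplus> r \<otimes> x [^] Suc e"
    unfolding cgenideal_def by (blast elim: set_addE)
  then have "x [^] e = a \<oplus> (r \<otimes> x) \<otimes> x [^] e" using xc by (simp add: m_ac)
  then have "(\<one> \<ominus> r \<otimes> x) \<otimes> x [^] e = a"
    by (rule absorb_multiple) (use ar xc pc ideal.Icarr[OF iA] in auto)
  moreover have "r \<otimes> x \<in> m" using ideal.I_l_closed[OF m_ideal x ar(2)] .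
  ultimately show ?thesis using unit_cancel[OF iA _ pc] ar(1) by metis
qed

lemma power_in_ideal:
  assumes iA: "ideal A R" and b: "length_le R A (carrier R) n" and x: "x \<in> m"
  shows "\<exists>j::nat. x [^] j \<in> A"
proof (rule ccontr)
  assume none: "\<not> ?thesis"
  have xc: "x \<in> carrier R" using x m_carrier by blast
  have pc: "\<And>e::nat. x [^] e \<in> carrier R" using xc by simp
  have iP: "\<And>e::nat. ideal (PIdl (x [^] e)) R" using cgenideal_ideal[OF pc] .
  define E where "E i = A <+> PIdl (x [^] (Suc n - i))" for i
  have iE: "\<forall>i\<le>Suc n. ideal (E i) R" unfolding E_def using add_ideals[OF iA iP] by blast
  have "\<one> \<in> E (Suc n)"
    using subsetD[OF ideal_sum_upper(2)[OF iA iP[of 0]] cgenideal_self[OF pc[of 0]]]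
    unfolding E_def by simp
  then have top: "E (Suc n) = carrier R" using ideal.one_imp_carrier iE by blast
  have strict: "E i \<subset> E (Suc i)" if i: "i < Suc n" for i
  proof -
    obtain e where ee: "Suc n - i = Suc e" "Suc n - Suc i = e" using i
      by (metis Suc_diff_Suc diff_Suc_Suc)
    have "x [^] Suc e \<in> PIdl (x [^] e)" unfolding cgenideal_def using xc m_comm by auto
    then have "E i \<subseteq> E (Suc i)" unfolding E_def ee
      using ideal_sum_least[OF iA iP add_ideals[OF iA iP]] ideal_sum_upper[OF iA iP]
        cgenideal_minimal[OF add_ideals[OF iA iP]] by blast
    moreover have "E i \<noteq> E (Suc i)"
      using power_step_stable[OF iA x] none unfolding E_def ee by blast
    ultimately show ?thesis by blast
  qed
  have "ideal_chain R (E 0) (carrier R) (Suc n)"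
    unfolding ideal_chain_def using iE top strict by blast
  moreover have "length_le R (E 0) (carrier R) n"
    using length_le_bottom_mono[OF iA _ b] ideal_sum_upper(1)[OF iA iP] unfolding E_def by blast
  ultimately show False unfolding length_le_def by fastforce
qed

lemma power_in_m: "x \<in> carrier R \<Longrightarrow> x [^] (k::nat) \<in> m \<Longrightarrow> x \<in> m"
proof (induction k)
  case 0
  then show ?case using one_notin_m by simp
next
  case (Suc k)
  then have "x [^] k \<otimes> x \<in> m" by simp
  then have "x [^] k \<in> m \<or> x \<in> m"
    using primeideal.I_prime[OF maximalideal_prime[OF max]] Suc.prems(1) by simp
  then show ?case using Suc by blast
qed

lemma radical_of_finite_colength:
  assumes iA: "ideal A R" and Am: "A \<subseteq> m" and b: "length_le R A (carrier R) n"
  shows "ring_radical R A = m"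
proof
  show "ring_radical R A \<subseteq> m" unfolding ring_radical_def using power_in_m Am by blast
  show "m \<subseteq> ring_radical R A" unfolding ring_radical_def using power_in_ideal[OF iA b] m_carrier by blast
qed

text \<open>Conversely, if \<open>A\<close> contains a power \<open>g\<^bsup>f g\<^esup>\<close> of every generator \<open>g\<close> of \<open>m\<close>, then
  \<open>R/A\<close> has length at most \<open>2\<^bsup>\<Sum>f\<^esup>\<close>: when some exponent \<open>f g \<ge> 2\<close>, both \<open>(A : g)\<close> and
  \<open>A + R g\<close> contain such powers with smaller exponent sum, and \<open>length_le_split\<close> applies.\<close>

lemma length_le_from_powers:
  assumes G: "finite G" "G \<subseteq> carrier R" "m = Idl G"
  shows "ideal A R \<Longrightarrow> (\<forall>g\<in>G. g [^] (f g :: nat) \<in> A) \<Longrightarrow> length_le R A (carrier R) (2 ^ sum f G)"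
proof (induction "sum f G" arbitrary: A f rule: less_induct)
  case less
  note iA = less.prems(1) and pw = less.prems(2)
  consider (zero) g where "g \<in> G" "f g = 0" | (big) g where "g \<in> G" "f g \<ge> 2"
    | (ones) "\<forall>g\<in>G. f g = 1"
    by (metis One_nat_def Suc_1 leI less_Suc_eq_0_disj less_one)
  then show ?case
  proof cases
    case zero
    then have "A = carrier R" using pw ideal.one_imp_carrier[OF iA] by force
    then show ?thesis using length_le_weaken[OF length_le_refl] by simp
  next
    case ones
    have "G \<subseteq> A"
    proof
      fix g assume "g \<in> G"
      then show "g \<in> A" using pw ones G(2) by (metis nat_pow_eone subsetD)
    qed
    then have "m \<subseteq> A" unfolding G(3) by (rule genideal_minimal[OF iA])
    then show ?thesis
      using length_le_weaken[OF length_le_bottom_mono[OF m_ideal _ length_le_maximal[OF max]]] by simp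
  next
    case big
    then have gc: "g \<in> carrier R" using G(2) by blast
    have iP: "ideal (PIdl g) R" using cgenideal_ideal[OF gc] .
    define f1 f2 where "f1 = f(g := f g - 1)" and "f2 = f(g := 1)"
    have s1: "sum f1 G + 1 = sum f G"
      using sum_update_nat[OF G(1) big(1), of f "f g - 1"] big(2) unfolding f1_def by simp
    have s2: "sum f2 G + (f g - 1) = sum f G"
      using sum_update_nat[OF G(1) big(1), of f 1] big(2) unfolding f2_def by simp
    have "g [^] (f g - 1) \<otimes> g = g [^] f g" using big(2) gc
      by (metis Suc_diff_1 less_le_trans nat_pow_Suc pos2)
    then have "\<forall>h\<in>G. h [^] f1 h \<in> colon R A g"
      using pw gc G(2) ideal.I_r_closed[OF iA] unfolding f1_def colon_def by auto
    then have b1: "length_le R (colon R A g) (carrier R) (2 ^ sum f1 G)"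
      using less.hyps[of f1] s1 colon_ideal[OF iA gc] by simp
    have "g \<in> A <+> PIdl g" using ideal_sum_upper(2)[OF iA iP] cgenideal_self[OF gc] by blast
    then have "\<forall>h\<in>G. h [^] f2 h \<in> A <+> PIdl g"
      using pw gc ideal_sum_upper(1)[OF iA iP] unfolding f2_def by auto
    then have b2: "length_le R (A <+> PIdl g) (carrier R) (2 ^ sum f2 G)"
      using less.hyps[of f2] s2 big(2) add_ideals[OF iA iP] by simp
    have "(2::nat) ^ sum f2 G \<le> 2 ^ sum f1 G" using s1 s2 big(2) by (intro power_increasing) auto
    then have "2 ^ sum f1 G + 2 ^ sum f2 G \<le> (2::nat) ^ sum f G"
      using s1 by (metis add.commute mult_2 plus_1_eq_Suc power_Suc add_left_mono)
    then show ?thesis using length_le_split[OF iA gc b1 b2] length_le_weaken by blast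
  qed
qed

text \<open>The key estimate \<open>\<lambda>(g \<circ> f) \<le> \<lambda>(f) \<lambda>(g)\<close>: push a composition series from \<open>f(m) R\<close> to
  \<open>R\<close> forward along \<open>g\<close>.  Each of its \<open>\<lambda>(f)\<close> steps is \<open>J + R x\<close> with \<open>m x \<subseteq> J\<close>, and its
  image \<open>J\<^sup>e + R g(x)\<close> is killed by \<open>g(m) R\<close>, hence has length at most \<open>\<lambda>(g)\<close>.\<close>

lemma composite_length_bound:
  assumes f: "f \<in> ring_hom R R" and g: "g \<in> ring_hom R R"
    and bf: "length_le R (Idl (f ` m)) (carrier R) nf"
    and bg: "length_le R (Idl (g ` m)) (carrier R) q"
  shows "length_le R (Idl ((g \<circ> f) ` m)) (carrier R) (quot_length R (Idl (f ` m)) * q)"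
proof -
  define I k where "I = Idl (f ` m)" and "k = quot_length R I"
  have fm: "f ` m \<subseteq> carrier R" and gm: "g ` m \<subseteq> carrier R"
    using m_carrier ring_hom_closed[OF f] ring_hom_closed[OF g] by blast+
  have iI: "ideal I R" unfolding I_def using genideal_ideal[OF fm] .
  have bI: "length_le R I (carrier R) nf" using bf I_def by simp
  obtain J where J: "J 0 = I" "J k = carrier R" "\<forall>i\<le>k. ideal (J i) R" "\<forall>i<k. J i \<subset> J (Suc i)"
    using quot_length_longest(3)[OF iI bI] unfolding k_def ideal_chain_def by blast
  have gJ: "g ` J i \<subseteq> carrier R" if "i \<le> k" for i
    using J(3) that ideal_subset_carrier ring_hom_closed[OF g] by blast
  define L where "L i = Idl (g ` J i)" for i
  have iL: "\<forall>i\<le>k. ideal (L i) R" unfolding L_def using gJ genideal_ideal by blast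
  have mL: "\<forall>i<k. L i \<subseteq> L (Suc i)"
    unfolding L_def using J(4) gJ subset_Idl_subset by (metis Suc_leI image_mono psubset_imp_subset)
  have "L 0 = Idl ((g \<circ> f) ` m)"
    unfolding L_def J(1) I_def using genideal_image[OF g fm] by (simp add: image_comp)
  moreover have "L k = carrier R"
  proof -
    have "\<one> \<in> L k" unfolding L_def using J(2) ring_hom_one[OF g] genideal_self[OF gJ[of k]] by force
    then show ?thesis using ideal.one_imp_carrier iL by blast
  qed
  moreover have "length_le R (L i) (L (Suc i)) q" if i: "i < k" for i
  proof -
    have iJ: "ideal (J i) R" "ideal (J (Suc i)) R" using J(3) i by auto
    obtain x where x: "x \<in> carrier R" "J (Suc i) = J i <+> PIdl x" "m \<subseteq> colon R (J i) x"
      using simple_step[OF iJ] longest_chain_saturated[OF iI bI J k_def i] J(4) i by blast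
    have "Idl (g ` m) \<subseteq> colon R (L i) (g x)"
      unfolding L_def by (rule genideal_image_colon[OF g iJ(1) x(1,3)])
    then have "length_le R (colon R (L i) (g x)) (carrier R) q"
      using length_le_bottom_mono[OF genideal_ideal[OF gm] _ bg] by blast
    then have "length_le R (L i) (L i <+> PIdl (g x)) q"
      using length_le_cyclic iL i ring_hom_closed[OF g x(1)] by simp
    then show ?thesis unfolding L_def x(2) genideal_image_sum[OF g iJ(1) x(1)] .
  qed
  ultimately show ?thesis
    using length_le_chain_sum[OF iL mL, of q] unfolding k_def I_def by simp
qed

text \<open>For an endomorphism with \<open>f(m) \<subseteq> m\<close>, being of finite length is equivalent to \<open>R/f(m)R\<close>
  having finite length (the converse direction uses that \<open>m\<close> is finitely generated).\<close>

lemma finite_length_hom_if_bounded: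
  assumes f: "f \<in> ring_hom R R" "f ` m \<subseteq> m" and b: "length_le R (Idl (f ` m)) (carrier R) n"
  shows "finite_length_hom R m R m f"
proof -
  have "f ` m \<subseteq> carrier R" using f(2) m_carrier by blast
  then have "ring_radical R (Idl (f ` m)) = m"
    using radical_of_finite_colength[OF genideal_ideal genideal_minimal[OF m_ideal f(2)] b] by blast
  then show ?thesis unfolding finite_length_hom_def using f by blast
qed

lemma bounded_if_finite_length_hom:
  assumes G: "finite G" "G \<subseteq> carrier R" "m = Idl G"
    and f: "finite_length_hom R m R m f"
  shows "\<exists>n. length_le R (Idl (f ` m)) (carrier R) n"
proof -
  have fm: "f ` m \<subseteq> carrier R" using f m_carrier unfolding finite_length_hom_def by blast
  have "\<forall>g\<in>G. \<exists>e::nat. g [^] e \<in> Idl (f ` m)"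
    using f G genideal_self unfolding finite_length_hom_def ring_radical_def by blast
  then obtain e where "\<forall>g\<in>G. g [^] (e g :: nat) \<in> Idl (f ` m)" by metis
  then show ?thesis using length_le_from_powers[OF G genideal_ideal[OF fm]] by blast
qed

lemma hom_length_bounds:
  assumes f: "f \<in> ring_hom R R" "f ` m \<subseteq> m" and b: "length_le R (Idl (f ` m)) (carrier R) n"
  shows "length_le R (Idl (f ` m)) (carrier R) (hom_length R m R f)" "1 \<le> hom_length R m R f"
proof -
  have iI: "ideal (Idl (f ` m)) R" using genideal_ideal f(2) m_carrier by blast
  show "length_le R (Idl (f ` m)) (carrier R) (hom_length R m R f)"
    unfolding hom_length_def using quot_length_longest(1)[OF iI b] .
  have "Idl (f ` m) \<noteq> carrier R" using genideal_minimal[OF m_ideal f(2)] m_proper m_carrier by blast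
  then show "1 \<le> hom_length R m R f" unfolding hom_length_def using quot_length_pos[OF iI b] by blast
qed

lemma hom_length_composite:
  assumes f: "f \<in> ring_hom R R" "f ` m \<subseteq> m" "length_le R (Idl (f ` m)) (carrier R) nf"
    and g: "g \<in> ring_hom R R" "g ` m \<subseteq> m" "length_le R (Idl (g ` m)) (carrier R) ng"
  shows "length_le R (Idl ((g \<circ> f) ` m)) (carrier R) (hom_length R m R f * hom_length R m R g)"
    "hom_length R m R (g \<circ> f) \<le> hom_length R m R f * hom_length R m R g"
proof -
  show b: "length_le R (Idl ((g \<circ> f) ` m)) (carrier R) (hom_length R m R f * hom_length R m R g)"
    using composite_length_bound[OF f(1) g(1) f(3) hom_length_bounds(1)[OF g]]
    unfolding hom_length_def .
  have "(g \<circ> f) ` m \<subseteq> carrier R" using f(2) g(2) m_carrier by (auto simp: image_comp[symmetric])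
  then have "ideal (Idl ((g \<circ> f) ` m)) R" by (rule genideal_ideal)
  then show "hom_length R m R (g \<circ> f) \<le> hom_length R m R f * hom_length R m R g"
    using quot_length_longest(2)[OF _ b] by (simp add: hom_length_def)
qed

lemma iterates_bounded:
  assumes G: "finite G" "G \<subseteq> carrier R" "m = Idl G"
    and \<phi>: "finite_length_hom R m R m \<phi>"
  shows "\<phi> ^^ n \<in> ring_hom R R \<and> (\<phi> ^^ n) ` m \<subseteq> m \<and> (\<exists>b. length_le R (Idl ((\<phi> ^^ n) ` m)) (carrier R) b)"
proof (induction n)
  case 0
  have "Idl m = m" using genideal_minimal[OF m_ideal, of m] genideal_self[OF m_carrier] by blast
  moreover have "id \<in> ring_hom R R" by (rule ring_hom_memI) auto
  ultimately show ?case using length_le_maximal[OF max] by (auto simp: id_def)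
next
  case (Suc n)
  have hom: "\<phi> \<in> ring_hom R R" "\<phi> ` m \<subseteq> m" using \<phi> unfolding finite_length_hom_def by auto
  obtain q where q: "length_le R (Idl (\<phi> ` m)) (carrier R) q"
    using bounded_if_finite_length_hom[OF G \<phi>] by blast
  obtain b where h: "\<phi> ^^ n \<in> ring_hom R R" "(\<phi> ^^ n) ` m \<subseteq> m"
    and b: "length_le R (Idl ((\<phi> ^^ n) ` m)) (carrier R) b"
    using Suc by blast
  have "\<phi> \<circ> \<phi> ^^ n \<in> ring_hom R R" using ring_hom_trans[OF h(1) hom(1)] .
  moreover have "(\<phi> \<circ> \<phi> ^^ n) ` m \<subseteq> m" unfolding image_comp[symmetric] using h(2) hom(2) by blast
  moreover have "length_le R (Idl ((\<phi> \<circ> \<phi> ^^ n) ` m)) (carrier R)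
      (hom_length R m R (\<phi> ^^ n) * hom_length R m R \<phi>)"
    using hom_length_composite(1)[OF h b hom q] .
  ultimately show ?case unfolding funpow.simps(2) by blast
qed

lemma log_iterate_length_subadditive:
  assumes G: "finite G" "G \<subseteq> carrier R" "m = Idl G"
    and \<phi>: "finite_length_hom R m R m \<phi>"
  defines "a \<equiv> \<lambda>n. ln (real (hom_length R m R (\<phi> ^^ n)))"
  shows "a n \<ge> 0" "a (i + j) \<le> a i + a j"
proof -
  note it = iterates_bounded[OF G \<phi>]
  define l where "l k = real (hom_length R m R (\<phi> ^^ k))" for k
  have l1: "l k \<ge> 1" for k unfolding l_def using it[of k] hom_length_bounds(2) by auto
  then show "a n \<ge> 0" unfolding a_def l_def[symmetric] by simp
  have "\<phi> ^^ (i + j) = \<phi> ^^ j \<circ> \<phi> ^^ i" by (simp only: add.commute[of i j] funpow_add)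
  then have "hom_length R m R (\<phi> ^^ (i + j)) \<le> hom_length R m R (\<phi> ^^ i) * hom_length R m R (\<phi> ^^ j)"
    using it[of i] it[of j] hom_length_composite(2) by metis
  then have "l (i + j) \<le> l i * l j" unfolding l_def by (metis of_nat_mono of_nat_mult)
  then have "ln (l (i + j)) \<le> ln (l i * l j)" using l1[of "i + j"] by simp
  also have "\<dots> = ln (l i) + ln (l j)" using l1[of i] l1[of j] by (simp add: ln_mult)
  finally show "a (i + j) \<le> a i + a j" unfolding a_def l_def .
qed

end

theorem mainTheorem1:
  fixes R :: "('a, 'b) ring_scheme" and m :: "'a set" and \<phi> :: "'a \<Rightarrow> 'a"
  assumes "noetherian_local R m"
    and "finite_length_hom R m R m \<phi>"
  shows "(\<forall>n\<ge>1. finite_length_hom R m R m (\<phi> ^^ n))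
    \<and> convergent (\<lambda>n. ln (real (hom_length R m R (\<phi> ^^ Suc n))) / real (Suc n))
    \<and> (\<lambda>n. ln (real (hom_length R m R (\<phi> ^^ Suc n))) / real (Suc n))
        \<longlonglongrightarrow> (INF n\<in>{1..}. ln (real (hom_length R m R (\<phi> ^^ n))) / real n)"
proof -
  have noeth: "noetherian_cring R" and max: "maximalideal m R"
    and unique: "\<And>I. maximalideal I R \<Longrightarrow> I = m"
    using assms(1) unfolding noetherian_local_def by auto
  interpret local_cring R m
    using noeth unfolding noetherian_cring_def
    by (intro local_cring.intro local_cring_axioms.intro max unique) blast
  obtain G where G: "finite G" "G \<subseteq> carrier R" "m = genideal R G"
    using noeth m_ideal unfolding noetherian_cring_def by blast
  have "finite_length_hom R m R m (\<phi> ^^ n)" for n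
    using iterates_bounded[OF G assms(2)] finite_length_hom_if_bounded by blast
  moreover have "(\<lambda>n. ln (real (hom_length R m R (\<phi> ^^ Suc n))) / real (Suc n))
        \<longlonglongrightarrow> (INF n\<in>{1..}. ln (real (hom_length R m R (\<phi> ^^ n))) / real n)"
    by (rule fekete[where a = "\<lambda>n. ln (real (hom_length R m R (\<phi> ^^ n)))"])
      (rule log_iterate_length_subadditive[OF G assms(2)])+
  ultimately show ?thesis using convergentI by blast
qed

end
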